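(* Let $\Phi$ be the standard normal CDF and $\eta_0:=2(1-\Phi(\sqrt{2\log 2}))\approx 0.239$. Let $0<\epsilon<0.2$, let $X\in\mathbb{R}^{m\times n}$ have i.i.d. $N(0,1)$ entries with $m\gtrsim\frac{n}{\epsilon^2}$, let $w^*\in\mathbb{R}^n$ be a fixed nonzero vector, and consider observations $y=Xw^*+\zeta+d$ with $\|\zeta\|_0\leq\eta m$, and the $\ell_1$ regression estimator $\widehat{w}\in\operatorname{argmin}_{w\in\mathbb{R}^n}\|y-Xw\|_1$. Then with high probability over $X$: 1. If $\eta>\eta_0+\epsilon$ and $d=0$, there exists a choice of $\zeta$ with $\|\zeta\|_0\leq\eta m$ such that $\ell_1$ regression does not return $w^*$ (i.e. $w^*$ is not a minimizer of $\|y-Xw\|_1$). 2. Even if $\zeta=0$, there exists a choice of $d$ such that $\widehat{w}$ satisfies $\|\widehat{w}-w^*\|_2\gtrsim\frac{\|d\|_1}{m}$.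
   Context: $\|\zeta\|_0$ denotes the number of nonzero entries of $\zeta$. The relations $\gtrsim$ mean inequalities holding up to absolute constant factors. *)

theory Defs
  imports "HOL-Probability.Probability"
begin

definition std_gauss :: "real measure" where
  "std_gauss = density lborel std_normal_density"

definition Phi :: "real \<Rightarrow> real" where
  "Phi t = measure std_gauss {..t}"

definition eta0 :: real where
  "eta0 = 2 * (1 - Phi (sqrt (2 * ln 2)))"

definition gauss_matrix :: "nat \<Rightarrow> nat \<Rightarrow> (nat \<times> nat \<Rightarrow> real) measure" where
  "gauss_matrix m n = PiM ({..<m} \<times> {..<n}) (\<lambda>_. std_gauss)"

text \<open>Vectors in R^k are functions nat => real, only indices < k matter.\<close>
definition l1norm :: "nat \<Rightarrow> (nat \<Rightarrow> real) \<Rightarrow> real" where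
  "l1norm k v = (\<Sum>i<k. \<bar>v i\<bar>)"

definition l2norm :: "nat \<Rightarrow> (nat \<Rightarrow> real) \<Rightarrow> real" where
  "l2norm k v = sqrt (\<Sum>i<k. (v i)\<^sup>2)"

definition l0norm :: "nat \<Rightarrow> (nat \<Rightarrow> real) \<Rightarrow> nat" where
  "l0norm k v = card {i. i < k \<and> v i \<noteq> 0}"

definition matvec :: "nat \<Rightarrow> (nat \<times> nat \<Rightarrow> real) \<Rightarrow> (nat \<Rightarrow> real) \<Rightarrow> (nat \<Rightarrow> real)" where
  "matvec n X w = (\<lambda>i. \<Sum>j<n. X (i, j) * w j)"

definition l1_obj :: "nat \<Rightarrow> nat \<Rightarrow> (nat \<times> nat \<Rightarrow> real) \<Rightarrow> (nat \<Rightarrow> real) \<Rightarrow> (nat \<Rightarrow> real) \<Rightarrow> real" where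
  "l1_obj m n X y w = l1norm m (\<lambda>i. y i - matvec n X w i)"

definition is_l1_minimizer :: "nat \<Rightarrow> nat \<Rightarrow> (nat \<times> nat \<Rightarrow> real) \<Rightarrow> (nat \<Rightarrow> real) \<Rightarrow> (nat \<Rightarrow> real) \<Rightarrow> bool" where
  "is_l1_minimizer m n X y w \<longleftrightarrow> (\<forall>v. l1_obj m n X y w \<le> l1_obj m n X y v)"

end

theory Submission
  imports Defs
begin

text \<open>
  Both parts are witnessed by the first column x = X e_0 of the design.

  For part 1, corrupt exactly the rows with |x_i| > t by zeta_i = 2 x_i. Moving from w* to
  w* + e_0 changes the i-th residual from |zeta_i| to |zeta_i - x_i|, i.e. by -|x_i| on corrupted
  rows and by +|x_i| on the others, so w* is not a minimizer as soon as the total gain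
  sum_i g_t(x_i) is positive, where g_t(x) = |x| for |x| > t and -|x| otherwise. Its mean
  4 phi(t) - 2 phi(0) is positive exactly for t < t_0 = sqrt(2 ln 2), because phi(t_0) = phi(0)/2,
  and eta0 = P(|g| > t_0). For t = t_0 - eps/2 the mean gain is at least eps/6 and the expected
  fraction of corrupted rows at most eta0 + eps/2; Chebyshev's inequality makes both hold with
  high probability once m >= C/eps^2.

  For part 2, take d = x. Then w* + e_0 interpolates y, so every l1 minimizer w' satisfies X u = x
  for u = w' - w*. Pairing with x gives |x|^2 = sum_j u_j <x, X e_j>, and by Cauchy-Schwarz
  |u|^2 >= |x|^4 / (|x|^4 + sum_{j>0} <x, X e_j>^2). As |x|^2 is close to m and the cross terms
  have total mean (n - 1) m, Markov's inequality gives |u| >= 1/4 >= |d|_1 / (8 m) once m >= C n.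
\<close>

section \<open>Sums of i.i.d. coordinates\<close>

lemma
  fixes f :: "'i \<Rightarrow> 'a \<Rightarrow> real"
  assumes N: "prob_space N" and K: "finite K" "J \<subseteq> K"
    and f: "\<And>i. i \<in> J \<Longrightarrow> integrable N (f i)"
  shows integrable_PiM_prod_subset: "integrable (PiM K (\<lambda>_. N)) (\<lambda>X. \<Prod>i\<in>J. f i (X i))"
    and integral_PiM_prod_subset:
      "(\<integral>X. (\<Prod>i\<in>J. f i (X i)) \<partial>PiM K (\<lambda>_. N)) = (\<Prod>i\<in>J. integral\<^sup>L N (f i))"
proof -
  interpret product_prob_space "\<lambda>_. N" K
    by (simp add: N product_prob_space_def product_prob_space_axioms_def product_sigma_finite_def
        prob_space_imp_sigma_finite)
  have J: "finite J"
    using K finite_subset by blast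
  have [measurable]: "f i \<in> borel_measurable N" if "i \<in> J" for i
    using f[OF that] by auto
  have [measurable]: "(\<lambda>X. restrict X J) \<in> PiM K (\<lambda>_. N) \<rightarrow>\<^sub>M PiM J (\<lambda>_. N)"
    by (rule measurable_restrict_subset[OF K(2)])
  have restrict: "PiM J (\<lambda>_. N) = distr (PiM K (\<lambda>_. N)) (PiM J (\<lambda>_. N)) (\<lambda>X. restrict X J)"
    by (rule distr_restrict[OF K(2,1)])
  have eq: "(\<Prod>i\<in>J. f i (restrict X J i)) = (\<Prod>i\<in>J. f i (X i))" for X
    by (intro prod.cong) auto
  show "integrable (PiM K (\<lambda>_. N)) (\<lambda>X. \<Prod>i\<in>J. f i (X i))"
    using product_integrable_prod[OF J f] by (subst (asm) restrict) (simp add: integrable_distr_eq eq)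
  show "(\<integral>X. (\<Prod>i\<in>J. f i (X i)) \<partial>PiM K (\<lambda>_. N)) = (\<Prod>i\<in>J. integral\<^sup>L N (f i))"
    using product_integral_prod[OF J f] by (subst (asm) restrict) (simp add: integral_distr eq)
qed

lemma (in prob_space) prob_Int_ge:
  assumes "A \<in> events" "B \<in> events"
  shows "prob A + prob B - 1 \<le> prob (A \<inter> B)"
  using assms finite_measure_Union'[of A B] finite_measure_Diff'[of B A] prob_le_1[of "A \<union> B"]
  by (simp add: Int_commute)

lemma (in prob_space) prob_less_ge:
  fixes f :: "'a \<Rightarrow> real"
  assumes [measurable]: "f \<in> borel_measurable M" and "prob {x \<in> space M. c \<le> f x} \<le> b"
  shows "1 - b \<le> prob {x \<in> space M. f x < c}"
proof -
  have "{x \<in> space M. f x < c} = space M - {x \<in> space M. c \<le> f x}"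
    by auto
  then show ?thesis
    using assms(2) prob_compl[of "{x \<in> space M. c \<le> f x}"] by simp
qed

lemma
  fixes h :: "'a \<Rightarrow> real"
  assumes N: "prob_space N" and K: "finite K" "i \<in> K" "k \<in> K"
    and h: "integrable N h" "integrable N (\<lambda>x. (h x)\<^sup>2)"
  shows integrable_iid_pair: "integrable (PiM K (\<lambda>_. N)) (\<lambda>X. h (X i) * h (X k))"
    and integral_iid_pair: "(\<integral>X. h (X i) * h (X k) \<partial>PiM K (\<lambda>_. N)) =
      (if i = k then \<integral>x. (h x)\<^sup>2 \<partial>N else (integral\<^sup>L N h)\<^sup>2)"
proof -
  have "integrable (PiM K (\<lambda>_. N)) (\<lambda>X. h (X i) * h (X k)) \<and>
    (\<integral>X. h (X i) * h (X k) \<partial>PiM K (\<lambda>_. N)) = (if i = k then \<integral>x. (h x)\<^sup>2 \<partial>N else (integral\<^sup>L N h)\<^sup>2)"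
  proof (cases "i = k")
    case True
    then show ?thesis
      using integrable_PiM_prod_subset[OF N K(1), of "{i}" "\<lambda>_ x. (h x)\<^sup>2"]
        integral_PiM_prod_subset[OF N K(1), of "{i}" "\<lambda>_ x. (h x)\<^sup>2"] K h
      by (simp add: power2_eq_square)
  next
    case False
    then show ?thesis
      using integrable_PiM_prod_subset[OF N K(1), of "{i, k}" "\<lambda>_. h"]
        integral_PiM_prod_subset[OF N K(1), of "{i, k}" "\<lambda>_. h"] K h
      by (simp add: power2_eq_square)
  qed
  then show "integrable (PiM K (\<lambda>_. N)) (\<lambda>X. h (X i) * h (X k))"
    "(\<integral>X. h (X i) * h (X k) \<partial>PiM K (\<lambda>_. N)) = (if i = k then \<integral>x. (h x)\<^sup>2 \<partial>N else (integral\<^sup>L N h)\<^sup>2)"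
    by auto
qed

lemma prob_iid_sum_deviation_less:
  fixes h :: "'a \<Rightarrow> real"
  assumes N: "prob_space N" and K: "finite K" "S \<subseteq> K"
    and h: "integrable N h" "integrable N (\<lambda>x. (h x)\<^sup>2)" and a: "0 < a"
  defines "P \<equiv> PiM K (\<lambda>_. N)"
  shows "1 - real (card S) * (\<integral>x. (h x)\<^sup>2 \<partial>N) / a\<^sup>2 \<le>
    measure P {X \<in> space P. \<bar>(\<Sum>i\<in>S. h (X i)) - real (card S) * integral\<^sup>L N h\<bar> < a}"
proof -
  interpret P: prob_space P
    unfolding P_def by (rule prob_space_PiM[OF N])
  define \<mu> where "\<mu> = integral\<^sup>L N h"
  define \<nu> where "\<nu> = (\<integral>x. (h x)\<^sup>2 \<partial>N)"
  define T where "T X = (\<Sum>i\<in>S. h (X i))" for X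
  have S: "finite S" "\<And>i. i \<in> S \<Longrightarrow> i \<in> K"
    using K finite_subset by blast+
  have single: "integrable P (\<lambda>X. h (X i))" "P.expectation (\<lambda>X. h (X i)) = \<mu>" if "i \<in> S" for i
    using integrable_PiM_prod_subset[OF N K(1), of "{i}" "\<lambda>_. h"]
      integral_PiM_prod_subset[OF N K(1), of "{i}" "\<lambda>_. h"] S(2)[OF that] h by (auto simp: P_def \<mu>_def)
  note pair = integrable_iid_pair[OF N K(1) S(2) S(2) h, folded P_def]
    integral_iid_pair[OF N K(1) S(2) S(2) h, folded P_def \<mu>_def \<nu>_def]
  have sq: "(T X)\<^sup>2 = (\<Sum>i\<in>S. \<Sum>k\<in>S. h (X i) * h (X k))" for X
    unfolding T_def power2_eq_square sum_product ..
  have T: "integrable P T" "P.expectation T = real (card S) * \<mu>"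
    unfolding T_def by (simp_all add: single Bochner_Integration.integral_sum[OF single(1)])
  have T2: "integrable P (\<lambda>X. (T X)\<^sup>2)"
    unfolding sq by (intro Bochner_Integration.integrable_sum pair) auto
  have [measurable]: "T \<in> borel_measurable P"
    using T(1) by auto
  have "P.expectation (\<lambda>X. (T X)\<^sup>2) = (\<Sum>i\<in>S. \<Sum>k\<in>S. if i = k then \<nu> else \<mu>\<^sup>2)"
    unfolding sq by (simp add: Bochner_Integration.integral_sum Bochner_Integration.integrable_sum pair)
  also have "\<dots> = (\<Sum>i\<in>S. \<Sum>k\<in>S. \<mu>\<^sup>2 + (if i = k then \<nu> - \<mu>\<^sup>2 else 0))"
    by (intro sum.cong) auto
  also have "\<dots> = real (card S) * (\<nu> - \<mu>\<^sup>2) + (real (card S) * \<mu>)\<^sup>2"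
    using S(1) by (simp add: sum.distrib power2_eq_square algebra_simps)
  finally have "P.variance T = real (card S) * (\<nu> - \<mu>\<^sup>2)"
    using P.variance_eq[OF T(1) T2] T(2) by simp
  also have "\<dots> \<le> real (card S) * \<nu>"
    by (simp add: mult_left_mono)
  finally have "P.prob {X \<in> space P. a \<le> \<bar>T X - P.expectation T\<bar>} \<le> real (card S) * \<nu> / a\<^sup>2"
    using P.Chebyshev_inequality[OF _ T2 a] by (simp add: divide_right_mono order_trans)
  then have "1 - real (card S) * \<nu> / a\<^sup>2 \<le> P.prob {X \<in> space P. \<bar>T X - P.expectation T\<bar> < a}"
    by (rule P.prob_less_ge[rotated]) measurable
  then show ?thesis
    by (simp add: T T_def \<mu>_def \<nu>_def)
qed

definition gram :: "nat \<Rightarrow> (nat \<times> nat \<Rightarrow> real) \<Rightarrow> nat \<Rightarrow> nat \<Rightarrow> real" where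
  "gram m X j k = (\<Sum>i<m. X (i, j) * X (i, k))"

lemma
  fixes N :: "real measure" and m n :: nat
  assumes N: "prob_space N" and mean: "has_bochner_integral N (\<lambda>x. x) 0"
    and var: "has_bochner_integral N (\<lambda>x. x\<^sup>2) 1" and j: "0 < j" "j < n"
  defines "P \<equiv> PiM ({..<m} \<times> {..<n}) (\<lambda>_. N)"
  shows integrable_gram_cross_sq: "integrable P (\<lambda>X. (gram m X 0 j)\<^sup>2)"
    and integral_gram_cross_sq: "(\<integral>X. (gram m X 0 j)\<^sup>2 \<partial>P) = real m"
proof -
  have K: "finite ({..<m} \<times> {..<n})"
    by simp
  have moment: "integrable P (\<lambda>X. X (i, 0) * X (i, j) * (X (k, 0) * X (k, j))) \<and>
      (\<integral>X. X (i, 0) * X (i, j) * (X (k, 0) * X (k, j)) \<partial>P) = (if i = k then 1 else 0)"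
    if "i < m" "k < m" for i k
  proof (cases "i = k")
    case True
    have eq: "(\<lambda>X. X (i, 0) * X (i, j) * (X (k, 0) * X (k, j))) = (\<lambda>X. \<Prod>c\<in>{(i, 0), (i, j)}. (X c)\<^sup>2)"
      using j True by (auto simp: power2_eq_square fun_eq_iff algebra_simps)
    show ?thesis
      unfolding eq using integrable_PiM_prod_subset[OF N K, of "{(i, 0), (i, j)}" "\<lambda>_ x. x\<^sup>2"]
        integral_PiM_prod_subset[OF N K, of "{(i, 0), (i, j)}" "\<lambda>_ x. x\<^sup>2"] that j True var
      by (auto simp: P_def has_bochner_integral_iff)
  next
    case False
    have eq: "(\<lambda>X. X (i, 0) * X (i, j) * (X (k, 0) * X (k, j))) = (\<lambda>X. \<Prod>c\<in>{(i, 0), (i, j), (k, 0), (k, j)}. X c)"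
      using j False by (auto simp: fun_eq_iff algebra_simps)
    show ?thesis
      unfolding eq using integrable_PiM_prod_subset[OF N K, of "{(i, 0), (i, j), (k, 0), (k, j)}" "\<lambda>_ x. x"]
        integral_PiM_prod_subset[OF N K, of "{(i, 0), (i, j), (k, 0), (k, j)}" "\<lambda>_ x. x"] that j False mean
      by (auto simp: P_def has_bochner_integral_iff)
  qed
  have sq: "(gram m X 0 j)\<^sup>2 = (\<Sum>i<m. \<Sum>k<m. X (i, 0) * X (i, j) * (X (k, 0) * X (k, j)))" for X
    unfolding gram_def power2_eq_square sum_product by simp
  show "integrable P (\<lambda>X. (gram m X 0 j)\<^sup>2)"
    unfolding sq by (intro Bochner_Integration.integrable_sum moment[THEN conjunct1]) auto
  have "(\<integral>X. (gram m X 0 j)\<^sup>2 \<partial>P) = (\<Sum>i<m. \<integral>X. (\<Sum>k<m. X (i, 0) * X (i, j) * (X (k, 0) * X (k, j))) \<partial>P)"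
    unfolding sq by (rule Bochner_Integration.integral_sum)
      (auto intro!: Bochner_Integration.integrable_sum moment[THEN conjunct1])
  also have "\<dots> = (\<Sum>i<m. \<Sum>k<m. \<integral>X. X (i, 0) * X (i, j) * (X (k, 0) * X (k, j)) \<partial>P)"
    by (intro sum.cong refl Bochner_Integration.integral_sum) (auto intro: moment[THEN conjunct1])
  also have "\<dots> = (\<Sum>i<m. \<Sum>k<m. if i = k then 1 else 0)"
    by (intro sum.cong refl) (simp add: moment)
  finally show "(\<integral>X. (gram m X 0 j)\<^sup>2 \<partial>P) = real m"
    by simp
qed

lemma prob_gram_cross_less:
  fixes N :: "real measure" and m n :: nat
  assumes N: "prob_space N" and mean: "has_bochner_integral N (\<lambda>x. x) 0"
    and var: "has_bochner_integral N (\<lambda>x. x\<^sup>2) 1" and a: "0 < a"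
  defines "P \<equiv> PiM ({..<m} \<times> {..<n}) (\<lambda>_. N)"
  shows "1 - real (n - 1) * real m / a \<le>
    measure P {X \<in> space P. (\<Sum>j\<in>{1..<n}. (gram m X 0 j)\<^sup>2) < a}"
proof -
  interpret P: prob_space P
    unfolding P_def by (rule prob_space_PiM[OF N])
  define C where "C X = (\<Sum>j\<in>{1..<n}. (gram m X 0 j)\<^sup>2)" for X :: "nat \<times> nat \<Rightarrow> real"
  note cross = integrable_gram_cross_sq[OF N mean var, where m = m and n = n, folded P_def]
    integral_gram_cross_sq[OF N mean var, where m = m and n = n, folded P_def]
  have int: "integrable P C"
    unfolding C_def by (intro Bochner_Integration.integrable_sum cross) auto
  have "P.expectation C = real (n - 1) * real m"
    unfolding C_def by (simp add: Bochner_Integration.integral_sum cross)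
  moreover have "AE X in P. 0 \<le> C X"
    by (simp add: C_def sum_nonneg)
  ultimately have "P.prob {X \<in> space P. a \<le> C X} \<le> real (n - 1) * real m / a"
    using integral_Markov_inequality_measure[OF int sets.top _ a] by simp
  then show ?thesis
    using P.prob_less_ge[of C] int by (simp add: C_def)
qed

section \<open>The standard Gaussian\<close>

abbreviation \<phi> :: "real \<Rightarrow> real" where
  "\<phi> \<equiv> std_normal_density"

lemma prob_space_std_gauss: "prob_space std_gauss"
  unfolding std_gauss_def by (rule prob_space_normal_density) simp

interpretation std_gauss: prob_space std_gauss
  by (rule prob_space_std_gauss)

lemma space_std_gauss [simp]: "space std_gauss = UNIV"
  and sets_std_gauss [simp]: "sets std_gauss = sets borel"
  unfolding std_gauss_def by simp_all

lemma
  fixes f :: "real \<Rightarrow> real"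
  assumes [measurable]: "f \<in> borel_measurable borel"
  shows integrable_std_gauss_iff:
      "integrable std_gauss f \<longleftrightarrow> integrable lborel (\<lambda>x. \<phi> x * f x)"
    and integral_std_gauss:
      "integral\<^sup>L std_gauss f = (\<integral>x. \<phi> x * f x \<partial>lborel)"
  unfolding std_gauss_def by (simp_all add: integrable_density integral_density)

lemma has_bochner_integral_std_gauss_iff:
  fixes f :: "real \<Rightarrow> real"
  assumes "f \<in> borel_measurable borel"
  shows "has_bochner_integral std_gauss f c \<longleftrightarrow>
    has_bochner_integral lborel (\<lambda>x. \<phi> x * f x) c"
  using assms by (simp add: has_bochner_integral_iff integrable_std_gauss_iff integral_std_gauss)

lemma std_gauss_moment_1: "has_bochner_integral std_gauss (\<lambda>x. x) 0"
  using std_normal_moment_odd[of 0] by (simp add: has_bochner_integral_std_gauss_iff)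

lemma std_gauss_moment_2: "has_bochner_integral std_gauss (\<lambda>x. x\<^sup>2) 1"
  using std_normal_moment_even[of 1] by (simp add: has_bochner_integral_std_gauss_iff)

lemma std_gauss_moment_4: "has_bochner_integral std_gauss (\<lambda>x. (x\<^sup>2)\<^sup>2) 3"
  using std_normal_moment_even[of 2]
  by (simp add: has_bochner_integral_std_gauss_iff fact_numeral flip: power_mult)

lemma std_gauss_moment_abs: "has_bochner_integral std_gauss abs (2 * \<phi> 0)"
proof -
  have "sqrt (2 / pi) = 2 * \<phi> 0"
    by (simp add: std_normal_density_def real_sqrt_divide field_simps real_sqrt_mult)
  then show ?thesis
    using std_normal_moment_abs_odd[of 0] by (simp add: has_bochner_integral_std_gauss_iff)
qed

lemma std_normal_density_minus [simp]: "\<phi> (- x) = \<phi> x"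
  by (simp add: std_normal_density_def)

lemma std_normal_density_le_0: "\<phi> x \<le> \<phi> 0"
  unfolding std_normal_density_def by (intro mult_left_mono) auto

lemma std_normal_density_has_derivative: "(\<phi> has_real_derivative - x * \<phi> x) (at x)"
proof -
  have "((\<lambda>x. exp (- x\<^sup>2 / 2) / sqrt (2 * pi)) has_real_derivative
      - x * (exp (- x\<^sup>2 / 2) / sqrt (2 * pi))) (at x)"
    by (auto intro!: derivative_eq_intros simp: field_simps)
  moreover have "\<phi> = (\<lambda>x. exp (- x\<^sup>2 / 2) / sqrt (2 * pi))"
    by (simp add: std_normal_density_def fun_eq_iff)
  ultimately show ?thesis
    by simp
qed

lemma measure_std_gauss:
  "A \<in> sets borel \<Longrightarrow> measure std_gauss A = (\<integral>x. \<phi> x * indicator A x \<partial>lborel)"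
  using integral_std_gauss[of "indicator A"] by simp

lemma measure_std_gauss_lessThan_uminus: "measure std_gauss {..< -t} = measure std_gauss {t<..}"
proof -
  have "measure std_gauss {..< -t} = (\<integral>x. \<phi> (- x) * indicator {..< -t} (- x) \<partial>lborel)"
    using integral_distr[of uminus lborel borel "\<lambda>x. \<phi> x * indicator {..< -t} x"]
    by (simp add: lborel_distr_uminus measure_std_gauss)
  also have "\<dots> = (\<integral>x. \<phi> x * indicator {t<..} x \<partial>lborel)"
    by (intro Bochner_Integration.integral_cong) (auto simp: indicator_def)
  finally show ?thesis by (simp add: measure_std_gauss)
qed

lemma measure_std_gauss_Ioc_le:
  assumes "t \<le> s" shows "measure std_gauss {t<..s} \<le> (s - t) * \<phi> 0"
proof -
  have "measure std_gauss {t<..s} \<le> (\<integral>x. \<phi> 0 * indicator {t<..s} x \<partial>lborel)"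
    unfolding measure_std_gauss[of "{t<..s}", simplified]
  proof (rule integral_mono)
    show "integrable lborel (\<lambda>x. \<phi> x * indicator {t<..s} x)"
      by (rule integrable_real_mult_indicator) auto
    show "integrable lborel (\<lambda>x. \<phi> 0 * indicator {t<..s} x)"
      using assms by (intro integrable_mult_right integrable_real_indicator) (auto simp: emeasure_lborel_Ioc)
    show "\<phi> x * indicator {t<..s} x \<le> \<phi> 0 * indicator {t<..s} x" for x
      using std_normal_density_le_0[of x] by (auto simp: indicator_def)
  qed
  then show ?thesis
    using assms by (simp add: measure_lborel_Ioc mult.commute)
qed

lemma measure_std_gauss_greaterThan: "measure std_gauss {s<..} = 1 - Phi s"
proof -
  have "measure std_gauss (space std_gauss - {..s}) = 1 - Phi s"
    unfolding Phi_def by (rule std_gauss.prob_compl) simp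
  moreover have "space std_gauss - {..s} = {s<..}" by auto
  ultimately show ?thesis by simp
qed

lemma measure_std_gauss_abs_greater_le:
  assumes "0 \<le> t" "t \<le> s"
  shows "measure std_gauss {x. t < \<bar>x\<bar>} \<le> 2 * (1 - Phi s) + 2 * (s - t) * \<phi> 0"
proof -
  have split: "{x. t < \<bar>x\<bar>} = {t<..} \<union> {..< -t}" by auto
  have "measure std_gauss {x. t < \<bar>x\<bar>} = measure std_gauss {t<..} + measure std_gauss {..< -t}"
    unfolding split using assms by (intro std_gauss.finite_measure_Union) auto
  also have "\<dots> = 2 * measure std_gauss ({t<..s} \<union> {s<..})"
    using assms by (simp add: measure_std_gauss_lessThan_uminus ivl_disj_un)
  also have "\<dots> = 2 * (measure std_gauss {t<..s} + (1 - Phi s))"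
    by (subst std_gauss.finite_measure_Union) (auto simp: measure_std_gauss_greaterThan)
  finally show ?thesis
    using measure_std_gauss_Ioc_le[OF assms(2)] by (simp add: algebra_simps)
qed

lemma interval_integral_std_normal_density_abs:
  assumes "0 \<le> t"
  shows "(LBINT x=-t..t. \<phi> x * \<bar>x\<bar>) = 2 * (\<phi> 0 - \<phi> t)"
proof -
  have cont: "continuous_on A (\<lambda>x. \<phi> x * \<bar>x\<bar>)" for A
    by (intro continuous_intros) (simp add: std_normal_density_def continuous_intros)
  have "(LBINT x=-t..(0::real). \<phi> x * \<bar>x\<bar>) = \<phi> 0 - \<phi> (-t)"
  proof (rule interval_integral_FTC_finite[OF cont])
    fix x assume "min (- t) 0 \<le> x" "x \<le> max (- t) 0"
    then have "(\<phi> has_real_derivative \<phi> x * \<bar>x\<bar>) (at x)"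
      using std_normal_density_has_derivative[of x] assms by (simp add: mult.commute)
    then show "(\<phi> has_vector_derivative \<phi> x * \<bar>x\<bar>) (at x within {min (- t) 0..max (- t) 0})"
      by (simp add: has_real_derivative_iff_has_vector_derivative[symmetric] has_field_derivative_at_within)
  qed
  moreover have "(LBINT x=(0::real)..t. \<phi> x * \<bar>x\<bar>) = - \<phi> t - - \<phi> 0"
  proof (rule interval_integral_FTC_finite[OF cont])
    fix x assume "min 0 t \<le> x" "x \<le> max 0 t"
    then have "((\<lambda>x. - \<phi> x) has_real_derivative \<phi> x * \<bar>x\<bar>) (at x)"
      using DERIV_minus[OF std_normal_density_has_derivative[of x]] assms by (simp add: mult.commute)
    then show "((\<lambda>x. - \<phi> x) has_vector_derivative \<phi> x * \<bar>x\<bar>) (at x within {min 0 t..max 0 t})"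
      by (simp add: has_real_derivative_iff_has_vector_derivative[symmetric] has_field_derivative_at_within)
  qed
  moreover have "(LBINT x=-t..(0::real). \<phi> x * \<bar>x\<bar>) + (LBINT x=(0::real)..t. \<phi> x * \<bar>x\<bar>) = (LBINT x=-t..t. \<phi> x * \<bar>x\<bar>)"
    using assms interval_integrable_continuous_on[OF _ cont, of "-t" t]
    by (intro interval_integral_sum) (auto simp: min_def max_def)
  ultimately show ?thesis by simp
qed

definition tail_gain :: "real \<Rightarrow> real \<Rightarrow> real" where
  "tail_gain t x = (if t < \<bar>x\<bar> then \<bar>x\<bar> else - \<bar>x\<bar>)"

lemma tail_gain_eq: "tail_gain t x = \<bar>x\<bar> - 2 * (\<bar>x\<bar> * indicator {-t..t} x)"
  by (auto simp: tail_gain_def indicator_def)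

lemma tail_gain_measurable [measurable]: "tail_gain t \<in> borel_measurable borel"
  unfolding tail_gain_def by measurable

lemma tail_gain_square [simp]: "(tail_gain t x)\<^sup>2 = x\<^sup>2"
  by (simp add: tail_gain_def)

lemma has_bochner_integral_tail_gain:
  assumes "0 \<le> t"
  shows "has_bochner_integral std_gauss (tail_gain t) (4 * \<phi> t - 2 * \<phi> 0)"
proof -
  have abs: "integrable std_gauss abs" "integral\<^sup>L std_gauss abs = 2 * \<phi> 0"
    using std_gauss_moment_abs by (auto simp: has_bochner_integral_iff)
  have inner: "integrable std_gauss (\<lambda>x. \<bar>x\<bar> * indicator {-t..t} x)"
    using abs(1) by (intro integrable_real_mult_indicator) auto
  have "integral\<^sup>L std_gauss (\<lambda>x. \<bar>x\<bar> * indicator {-t..t} x) = (LBINT x=-t..t. \<phi> x * \<bar>x\<bar>)"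
    using assms by (auto simp: integral_std_gauss interval_integral_Icc set_lebesgue_integral_def
        indicator_def intro!: Bochner_Integration.integral_cong)
  then show ?thesis
    using abs inner interval_integral_std_normal_density_abs[OF assms]
    by (simp add: tail_gain_eq[abs_def] has_bochner_integral_iff)
qed

lemma one_le_sqrt_2_ln_2: "1 \<le> sqrt (2 * ln 2)"
  using ln2_ge_two_thirds by (simp add: real_le_rsqrt)

lemma std_normal_density_0_bounds: "1/3 \<le> \<phi> 0" "\<phi> 0 \<le> 1/2"
proof -
  have "2 \<le> sqrt (2 * pi)" using pi_gt3 by (simp add: real_le_rsqrt)
  moreover have "sqrt (2 * pi) \<le> 3" using pi_less_4 by (simp add: real_sqrt_le_iff real_le_lsqrt)
  ultimately show "1/3 \<le> \<phi> 0" "\<phi> 0 \<le> 1/2"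
    by (simp_all add: std_normal_density_def field_simps)
qed

lemma measure_std_gauss_abs_greater_threshold_le:
  assumes "0 \<le> \<epsilon>" "\<epsilon> \<le> 2"
  shows "measure std_gauss {x. sqrt (2 * ln 2) - \<epsilon>/2 < \<bar>x\<bar>} \<le> eta0 + \<epsilon>/2"
proof -
  have "measure std_gauss {x. sqrt (2 * ln 2) - \<epsilon>/2 < \<bar>x\<bar>} \<le> eta0 + \<epsilon> * \<phi> 0"
    using measure_std_gauss_abs_greater_le[of "sqrt (2 * ln 2) - \<epsilon>/2" "sqrt (2 * ln 2)"]
      one_le_sqrt_2_ln_2 assms by (simp add: eta0_def)
  also have "\<dots> \<le> eta0 + \<epsilon>/2"
    using mult_left_mono[OF std_normal_density_0_bounds(2), of \<epsilon>] assms by simp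
  finally show ?thesis .
qed

lemma tail_gain_mean_threshold_ge:
  assumes "0 \<le> \<epsilon>" "\<epsilon> \<le> 2"
  shows "\<epsilon> / 6 \<le> 4 * \<phi> (sqrt (2 * ln 2) - \<epsilon>/2) - 2 * \<phi> 0"
proof -
  define t0 where "t0 = sqrt (2 * ln 2)"
  have t0: "1 \<le> t0" "t0\<^sup>2 = 2 * ln 2"
    using one_le_sqrt_2_ln_2 by (simp_all add: t0_def)
  have "(t0 - \<epsilon>/2)\<^sup>2 = t0\<^sup>2 - \<epsilon> * t0 + \<epsilon>\<^sup>2/4"
    by (simp add: power2_eq_square algebra_simps)
  also have "\<dots> \<le> 2 * ln 2 - \<epsilon>/2"
    using t0 assms mult_left_mono[of 1 t0 \<epsilon>] mult_left_mono[of \<epsilon> 2 \<epsilon>]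
    by (simp add: power2_eq_square)
  finally have "exp (- ln 2 + \<epsilon>/4) \<le> exp (- (t0 - \<epsilon>/2)\<^sup>2 / 2)"
    by simp
  moreover have "exp (- ln 2 + \<epsilon>/4) = exp (\<epsilon>/4) / 2"
    unfolding exp_add by (simp add: exp_minus)
  moreover have "1 + \<epsilon>/4 \<le> exp (\<epsilon>/4)"
    by (rule exp_ge_add_one_self)
  ultimately have "\<epsilon>/4 \<le> 2 * exp (- (t0 - \<epsilon>/2)\<^sup>2 / 2) - 1"
    by linarith
  then have "2 * (1/3) * (\<epsilon>/4) \<le> 2 * \<phi> 0 * (2 * exp (- (t0 - \<epsilon>/2)\<^sup>2 / 2) - 1)"
    using std_normal_density_0_bounds(1) assms by (intro mult_mono) auto
  also have "\<dots> = 4 * \<phi> (t0 - \<epsilon>/2) - 2 * \<phi> 0"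
    by (simp add: std_normal_density_def algebra_simps)
  finally show ?thesis
    by (simp add: t0_def)
qed

section \<open>Least absolute deviations\<close>

lemma matvec_add: "matvec n X (\<lambda>j. v j + w j) i = matvec n X v i + matvec n X w i"
  by (simp add: matvec_def distrib_left sum.distrib)

lemma matvec_diff: "matvec n X (\<lambda>j. v j - w j) i = matvec n X v i - matvec n X w i"
  by (simp add: matvec_def right_diff_distrib sum_subtractf)

lemma matvec_unit: "k < n \<Longrightarrow> matvec n X (\<lambda>j. if j = k then 1 else 0) i = X (i, k)"
  by (simp add: matvec_def mult.commute[of "X _"] if_distrib[of "\<lambda>c. c * X _"] cong: if_cong)

definition reflect_large :: "real \<Rightarrow> (nat \<Rightarrow> real) \<Rightarrow> nat \<Rightarrow> real" where
  "reflect_large t r i = (if t < \<bar>r i\<bar> then 2 * r i else 0)"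

lemma l1_obj_reflect_large:
  fixes t :: real and n :: nat and X :: "nat \<times> nat \<Rightarrow> real" and v w :: "nat \<Rightarrow> real"
  defines "y \<equiv> \<lambda>i. matvec n X w i + reflect_large t (matvec n X v) i"
  shows "l1_obj m n X y (\<lambda>j. w j + v j) = l1_obj m n X y w - (\<Sum>i<m. tail_gain t (matvec n X v i))"
proof -
  have "\<bar>reflect_large t (matvec n X v) i - matvec n X v i\<bar> =
      \<bar>reflect_large t (matvec n X v) i\<bar> - tail_gain t (matvec n X v i)" for i
    by (auto simp: reflect_large_def tail_gain_def)
  then show ?thesis
    by (simp add: y_def l1_obj_def l1norm_def matvec_add sum_subtractf)
qed

lemma reflect_large_not_l1_minimizer:
  assumes "0 < (\<Sum>i<m. tail_gain t (matvec n X v i))"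
  shows "\<not> is_l1_minimizer m n X (\<lambda>i. matvec n X w i + reflect_large t (matvec n X v) i) w"
  using assms l1_obj_reflect_large[of m n X w t v]
  unfolding is_l1_minimizer_def by (metis diff_less_eq less_add_same_cancel1 not_le)

lemma l0norm_reflect_large:
  "0 \<le> t \<Longrightarrow> l0norm m (reflect_large t r) = card {i. i < m \<and> t < \<bar>r i\<bar>}"
  unfolding l0norm_def reflect_large_def by (intro arg_cong[where f = card]) auto

lemma l1_minimizer_interpolates:
  assumes "is_l1_minimizer m n X y w" "l1_obj m n X y v = 0" "i < m"
  shows "matvec n X w i = y i"
proof -
  have "l1_obj m n X y w \<le> 0"
    using assms(1,2) unfolding is_l1_minimizer_def by metis
  then have "(\<Sum>i<m. \<bar>y i - matvec n X w i\<bar>) = 0"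
    unfolding l1_obj_def l1norm_def by (meson order_antisym sum_nonneg abs_ge_zero)
  then show ?thesis
    using assms(3) by (simp add: sum_nonneg_eq_0_iff)
qed

lemma gram_cauchy_schwarz:
  assumes "0 < n" and u: "\<And>i. i < m \<Longrightarrow> matvec n X u i = X (i, 0)"
  shows "(gram m X 0 0)\<^sup>2 \<le> (\<Sum>j<n. (u j)\<^sup>2) * ((gram m X 0 0)\<^sup>2 + (\<Sum>j\<in>{1..<n}. (gram m X 0 j)\<^sup>2))"
proof -
  have "gram m X 0 0 = (\<Sum>i<m. X (i, 0) * (\<Sum>j<n. X (i, j) * u j))"
    unfolding gram_def using u by (simp add: matvec_def)
  also have "\<dots> = (\<Sum>j<n. u j * gram m X 0 j)"
    unfolding gram_def sum_distrib_left sum_distrib_right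
    by (subst sum.swap) (simp add: algebra_simps)
  finally have "(gram m X 0 0)\<^sup>2 \<le> (\<Sum>j<n. (u j)\<^sup>2) * (\<Sum>j<n. (gram m X 0 j)\<^sup>2)"
    using Cauchy_Schwarz_ineq_sum[of u "gram m X 0" "{..<n}"] by simp
  moreover have "{..<n} = insert 0 {1..<n}"
    using assms(1) by auto
  ultimately show ?thesis
    by simp
qed

lemma l1norm_square_le: "(l1norm m d)\<^sup>2 \<le> real m * (\<Sum>i<m. (d i)\<^sup>2)"
  using Cauchy_Schwarz_ineq_sum[of "\<lambda>_. 1" "\<lambda>i. \<bar>d i\<bar>" "{..<m}"] by (simp add: l1norm_def)

lemma column_fit_sum_sq_ge:
  assumes n: "0 < n" and u: "\<And>i. i < m \<Longrightarrow> matvec n X u i = X (i, 0)"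
    and gram00: "\<bar>gram m X 0 0 - real m\<bar> < real m / 2"
    and cross: "(\<Sum>j\<in>{1..<n}. (gram m X 0 j)\<^sup>2) < (real m)\<^sup>2 / 32"
  shows "1/16 \<le> (\<Sum>j<n. (u j)\<^sup>2)"
proof -
  define Q where "Q = gram m X 0 0"
  have m: "0 < real m" and Q: "real m / 2 < Q" "Q < 3 * real m / 2"
    using gram00 unfolding Q_def abs_less_iff by linarith+
  have "Q\<^sup>2 + (\<Sum>j\<in>{1..<n}. (gram m X 0 j)\<^sup>2) \<le> 4 * (real m)\<^sup>2"
  proof -
    have "Q\<^sup>2 \<le> (3 * real m / 2)\<^sup>2"
      using Q m by (intro power_mono) auto
    also have "\<dots> = 9/4 * (real m)\<^sup>2"
      by (simp add: power2_eq_square)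
    finally show ?thesis
      using cross zero_le_power2[of "real m"] by linarith
  qed
  moreover have "Q\<^sup>2 \<le> (\<Sum>j<n. (u j)\<^sup>2) * (Q\<^sup>2 + (\<Sum>j\<in>{1..<n}. (gram m X 0 j)\<^sup>2))"
    unfolding Q_def by (rule gram_cauchy_schwarz[OF n u])
  ultimately have "Q\<^sup>2 \<le> (\<Sum>j<n. (u j)\<^sup>2) * (4 * (real m)\<^sup>2)"
    using mult_left_mono[of _ _ "\<Sum>j<n. (u j)\<^sup>2"] by (meson order_trans sum_nonneg zero_le_power2)
  moreover have "(real m / 2)\<^sup>2 \<le> Q\<^sup>2"
    using Q m by (intro power_mono) auto
  ultimately have "(real m)\<^sup>2 * (1/16) \<le> (real m)\<^sup>2 * (\<Sum>j<n. (u j)\<^sup>2)"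
    by (simp add: power_divide algebra_simps)
  then show ?thesis
    using m by simp
qed

lemma l1_minimizer_far_under_column_noise:
  assumes n: "0 < n"
    and gram00: "\<bar>gram m X 0 0 - real m\<bar> < real m / 2"
    and cross: "(\<Sum>j\<in>{1..<n}. (gram m X 0 j)\<^sup>2) < (real m)\<^sup>2 / 32"
    and min: "is_l1_minimizer m n X (\<lambda>i. matvec n X w i + X (i, 0)) what"
  shows "1/8 * l1norm m (\<lambda>i. X (i, 0)) / real m \<le> l2norm n (\<lambda>j. what j - w j)"
proof -
  have m: "0 < real m"
    using gram00 by linarith
  have exact: "l1_obj m n X (\<lambda>i. matvec n X w i + X (i, 0)) (\<lambda>j. w j + (if j = 0 then 1 else 0)) = 0"
    using n by (simp add: l1_obj_def l1norm_def matvec_add matvec_unit)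
  have "matvec n X (\<lambda>j. what j - w j) i = X (i, 0)" if "i < m" for i
    using l1_minimizer_interpolates[OF min exact that] by (simp add: matvec_diff)
  then have u: "1/16 \<le> (\<Sum>j<n. (what j - w j)\<^sup>2)"
    using column_fit_sum_sq_ge[OF n _ gram00 cross] by blast
  have "(l1norm m (\<lambda>i. X (i, 0)))\<^sup>2 \<le> real m * gram m X 0 0"
    using l1norm_square_le[of m "\<lambda>i. X (i, 0)"] by (simp add: gram_def power2_eq_square)
  also have "\<dots> \<le> real m * (4 * real m)"
    using gram00 m unfolding abs_less_iff by (intro mult_left_mono) auto
  also have "\<dots> = 4 * (real m)\<^sup>2"
    by (simp add: power2_eq_square)
  finally have "(1/8 * l1norm m (\<lambda>i. X (i, 0)) / real m)\<^sup>2 \<le> 1/16"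
    using m by (simp add: power_divide field_simps)
  then have "(1/8 * l1norm m (\<lambda>i. X (i, 0)) / real m)\<^sup>2 \<le> (\<Sum>j<n. (what j - w j)\<^sup>2)"
    using u by linarith
  then show ?thesis
    unfolding l2norm_def by (simp add: real_le_rsqrt)
qed

lemma prob_space_gauss_matrix: "prob_space (gauss_matrix m n)"
  unfolding gauss_matrix_def by (rule prob_space_PiM[OF prob_space_std_gauss])

interpretation gauss_matrix: prob_space "gauss_matrix m n" for m n
  by (rule prob_space_gauss_matrix)

text \<open>Stated for every index, so that the measurability prover can use it: off the index set
  the entry is the constant \<^const>\<open>undefined\<close> on the space.\<close>

lemma measurable_gauss_matrix_entry [measurable]: "(\<lambda>X. X a) \<in> borel_measurable (gauss_matrix m n)"
proof (cases "a \<in> {..<m} \<times> {..<n}")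
  case True
  have "(\<lambda>X. X a) \<in> gauss_matrix m n \<rightarrow>\<^sub>M std_gauss"
    unfolding gauss_matrix_def by (rule measurable_component_singleton[OF True])
  then show ?thesis
    by (simp add: measurable_cong_sets[OF refl sets_std_gauss])
next
  case False
  have "(\<lambda>X. undefined :: real) \<in> borel_measurable (gauss_matrix m n)" by simp
  moreover have "X a = undefined" if "X \<in> space (gauss_matrix m n)" for X
    using that False unfolding gauss_matrix_def by (cases a) (auto simp: space_PiM PiE_def extensional_def)
  ultimately show ?thesis
    by (metis (no_types, lifting) measurable_cong)
qed

lemma prob_gauss_column_sum_deviation_less:
  fixes h :: "real \<Rightarrow> real"
  assumes "j < n" "integrable std_gauss h" "integrable std_gauss (\<lambda>x. (h x)\<^sup>2)" "0 < a"
  shows "1 - real m * (\<integral>x. (h x)\<^sup>2 \<partial>std_gauss) / a\<^sup>2 \<le>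
    measure (gauss_matrix m n) {X \<in> space (gauss_matrix m n).
      \<bar>(\<Sum>i<m. h (X (i, j))) - real m * integral\<^sup>L std_gauss h\<bar> < a}"
proof -
  define S where "S = (\<lambda>i. (i, j)) ` {..<m}"
  have "inj_on (\<lambda>i. (i, j)) {..<m}"
    by (simp add: inj_on_def)
  then have "card S = m" "(\<Sum>i<m. h (X (i, j))) = (\<Sum>c\<in>S. h (X c))" for X
    by (simp_all add: S_def card_image sum.reindex)
  moreover have "S \<subseteq> {..<m} \<times> {..<n}"
    using assms(1) by (auto simp: S_def)
  ultimately show ?thesis
    using prob_iid_sum_deviation_less[OF prob_space_std_gauss _ _ assms(2-4), of "{..<m} \<times> {..<n}" S]
    unfolding gauss_matrix_def by simp
qed

lemma card_abs_greater_eq_sum_indicator: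
  fixes r :: "nat \<Rightarrow> real"
  shows "real (card {i. i < m \<and> t < \<bar>r i\<bar>}) = (\<Sum>i<m. indicator {x. t < \<bar>x\<bar>} (r i))"
proof -
  have "(\<Sum>i<m. indicator {x. t < \<bar>x\<bar>} (r i)) = (\<Sum>i<m. of_bool (t < \<bar>r i\<bar>) :: real)"
    by (simp add: indicator_def)
  also have "\<dots> = real (card ({..<m} \<inter> {i. t < \<bar>r i\<bar>}))"
    by (rule sum_of_bool_eq) simp_all
  also have "{..<m} \<inter> {i. t < \<bar>r i\<bar>} = {i. i < m \<and> t < \<bar>r i\<bar>}"
    by auto
  finally show ?thesis ..
qed

lemma prob_gauss_tail_count_less:
  assumes "0 < \<epsilon>" "\<epsilon> \<le> 2" "0 < m" "0 < n"
  defines "t \<equiv> sqrt (2 * ln 2) - \<epsilon>/2"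
  defines "E \<equiv> {X \<in> space (gauss_matrix m n).
    real (card {i. i < m \<and> t < \<bar>X (i, 0)\<bar>}) < (eta0 + 3/4 * \<epsilon>) * real m}"
  shows "E \<in> sets (gauss_matrix m n)" and "1 - 16 / (\<epsilon>\<^sup>2 * real m) \<le> measure (gauss_matrix m n) E"
proof -
  define count where "count X = (\<Sum>i<m. indicator {x. t < \<bar>x\<bar>} (X (i, 0)) :: real)" for X :: "nat \<times> nat \<Rightarrow> real"
  define p where "p = measure std_gauss {x. t < \<bar>x\<bar>}"
  have E: "E = {X \<in> space (gauss_matrix m n). count X < (eta0 + 3/4 * \<epsilon>) * real m}"
    by (simp add: E_def count_def card_abs_greater_eq_sum_indicator)
  show sets: "E \<in> sets (gauss_matrix m n)"
    unfolding E count_def by measurable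
  have p: "p \<le> eta0 + \<epsilon>/2"
    unfolding p_def t_def using assms(1,2) by (rule measure_std_gauss_abs_greater_threshold_le[OF less_imp_le])
  have sq: "(\<lambda>x. (indicator {x. t < \<bar>x\<bar>} x :: real)\<^sup>2) = indicator {x. t < \<bar>x\<bar>}"
    by (auto simp: indicator_def fun_eq_iff)
  have int: "integrable std_gauss (indicator {x. t < \<bar>x\<bar>} :: real \<Rightarrow> real)"
    by (simp add: std_gauss.emeasure_finite less_top[symmetric])
  have "1 - real m * p / (\<epsilon> * real m / 4)\<^sup>2 \<le>
      measure (gauss_matrix m n) {X \<in> space (gauss_matrix m n). \<bar>count X - real m * p\<bar> < \<epsilon> * real m / 4}"
    using prob_gauss_column_sum_deviation_less[of 0 n "indicator {x. t < \<bar>x\<bar>}" "\<epsilon> * real m / 4" m] assms int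
    unfolding sq by (simp add: count_def p_def)
  also have "\<dots> \<le> measure (gauss_matrix m n) E"
  proof (rule gauss_matrix.finite_measure_mono[OF _ sets])
    show "{X \<in> space (gauss_matrix m n). \<bar>count X - real m * p\<bar> < \<epsilon> * real m / 4} \<subseteq> E"
    proof
      fix X assume X: "X \<in> {X \<in> space (gauss_matrix m n). \<bar>count X - real m * p\<bar> < \<epsilon> * real m / 4}"
      then have "count X < real m * p + \<epsilon> * real m / 4"
        unfolding mem_Collect_eq abs_less_iff by linarith
      moreover have "real m * p \<le> eta0 * real m + \<epsilon> / 2 * real m"
        using mult_left_mono[OF p, of "real m"] by (simp add: algebra_simps)
      ultimately show "X \<in> E"
        using X by (simp add: E distrib_right)
    qed
  qed
  finally have bound: "1 - real m * p / (\<epsilon> * real m / 4)\<^sup>2 \<le> measure (gauss_matrix m n) E" .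
  have "real m * p / (\<epsilon> * real m / 4)\<^sup>2 = 16 * p / (\<epsilon>\<^sup>2 * real m)"
    using assms(3) by (simp add: field_simps power2_eq_square)
  moreover have "16 * p / (\<epsilon>\<^sup>2 * real m) \<le> 16 / (\<epsilon>\<^sup>2 * real m)"
    unfolding p_def by (intro divide_right_mono) auto
  ultimately show "1 - 16 / (\<epsilon>\<^sup>2 * real m) \<le> measure (gauss_matrix m n) E"
    using bound by linarith
qed

lemma prob_gauss_tail_gain_pos:
  assumes "0 < \<epsilon>" "\<epsilon> \<le> 2" "0 < m" "0 < n"
  defines "E \<equiv> {X \<in> space (gauss_matrix m n). 0 < (\<Sum>i<m. tail_gain (sqrt (2 * ln 2) - \<epsilon>/2) (X (i, 0)))}"
  shows "E \<in> sets (gauss_matrix m n)" and "1 - 36 / (\<epsilon>\<^sup>2 * real m) \<le> measure (gauss_matrix m n) E"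
proof -
  show "E \<in> sets (gauss_matrix m n)"
    unfolding E_def by measurable
  define t where "t = sqrt (2 * ln 2) - \<epsilon>/2"
  define \<mu> where "\<mu> = 4 * \<phi> t - 2 * \<phi> 0"
  have \<mu>: "\<epsilon> / 6 \<le> \<mu>"
    using tail_gain_mean_threshold_ge assms(1,2) by (simp add: \<mu>_def t_def)
  have "0 \<le> t"
    unfolding t_def using one_le_sqrt_2_ln_2 assms(2) by linarith
  then have gain: "integrable std_gauss (tail_gain t)" "integral\<^sup>L std_gauss (tail_gain t) = \<mu>"
    using has_bochner_integral_tail_gain by (auto simp: \<mu>_def has_bochner_integral_iff)
  have sq: "integrable std_gauss (\<lambda>x. (tail_gain t x)\<^sup>2)" "(\<integral>x. (tail_gain t x)\<^sup>2 \<partial>std_gauss) = 1"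
    using std_gauss_moment_2 by (auto simp: has_bochner_integral_iff)
  have pos: "0 < real m * \<mu>"
    using \<mu> assms(1,3) by simp
  have "1 - real m / (real m * \<mu>)\<^sup>2 \<le> measure (gauss_matrix m n)
      {X \<in> space (gauss_matrix m n). \<bar>(\<Sum>i<m. tail_gain t (X (i, 0))) - real m * \<mu>\<bar> < real m * \<mu>}"
    using prob_gauss_column_sum_deviation_less[OF assms(4) gain(1) sq(1) pos, of m] gain(2) sq(2) by simp
  also have "\<dots> \<le> measure (gauss_matrix m n)
      {X \<in> space (gauss_matrix m n). 0 < (\<Sum>i<m. tail_gain t (X (i, 0)))}"
    by (intro gauss_matrix.finite_measure_mono) (auto simp: abs_less_iff)
  finally have bound: "1 - real m / (real m * \<mu>)\<^sup>2 \<le> measure (gauss_matrix m n)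
      {X \<in> space (gauss_matrix m n). 0 < (\<Sum>i<m. tail_gain t (X (i, 0)))}" .
  have "real m / (real m * \<mu>)\<^sup>2 = 1 / (real m * \<mu>\<^sup>2)"
    using assms(3) by (simp add: power2_eq_square)
  also have "\<dots> \<le> 1 / (real m * (\<epsilon> / 6)\<^sup>2)"
    using \<mu> assms(1,3) by (intro divide_left_mono mult_left_mono power_mono mult_pos_pos) auto
  also have "\<dots> = 36 / (\<epsilon>\<^sup>2 * real m)"
    by (simp add: power_divide)
  finally show "1 - 36 / (\<epsilon>\<^sup>2 * real m) \<le> measure (gauss_matrix m n) E"
    using bound by (simp add: E_def t_def)
qed

lemma prob_gauss_gram_diag_close:
  assumes "0 < m" "0 < n"
  defines "E \<equiv> {X \<in> space (gauss_matrix m n). \<bar>gram m X 0 0 - real m\<bar> < real m / 2}"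
  shows "E \<in> sets (gauss_matrix m n)" and "1 - 12 / real m \<le> measure (gauss_matrix m n) E"
proof -
  show "E \<in> sets (gauss_matrix m n)"
    unfolding E_def gram_def by measurable
  have "gram m X 0 0 = (\<Sum>i<m. (X (i, 0))\<^sup>2)" for X
    by (simp add: gram_def power2_eq_square)
  moreover have "real m * 3 / (real m / 2)\<^sup>2 = 12 / real m"
    using assms(1) by (simp add: power2_eq_square)
  ultimately show "1 - 12 / real m \<le> measure (gauss_matrix m n) E"
    using prob_gauss_column_sum_deviation_less[OF assms(2), of "\<lambda>x. x\<^sup>2" "real m / 2" m]
      std_gauss_moment_2 std_gauss_moment_4 assms(1)
    by (simp add: E_def has_bochner_integral_iff)
qed

lemma prob_gauss_gram_cross_small:
  fixes n :: nat
  assumes "0 < m"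
  defines "E \<equiv> {X \<in> space (gauss_matrix m n). (\<Sum>j\<in>{1..<n}. (gram m X 0 j)\<^sup>2) < (real m)\<^sup>2 / 32}"
  shows "E \<in> sets (gauss_matrix m n)" and "1 - 32 * real (n - 1) / real m \<le> measure (gauss_matrix m n) E"
proof -
  show "E \<in> sets (gauss_matrix m n)"
    unfolding E_def gram_def by measurable
  have "real (n - 1) * real m / ((real m)\<^sup>2 / 32) = 32 * real (n - 1) / real m"
    using assms by (simp add: power2_eq_square)
  then show "1 - 32 * real (n - 1) / real m \<le> measure (gauss_matrix m n) E"
    using prob_gram_cross_less[OF prob_space_std_gauss std_gauss_moment_1 std_gauss_moment_2, where a = "(real m)\<^sup>2 / 32" and m = m and n = n] assms
    by (simp add: E_def gauss_matrix_def)
qed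

text \<open>The events of the union bound: the first two drive part 1, the last two part 2.\<close>

definition typical_design :: "nat \<Rightarrow> nat \<Rightarrow> real \<Rightarrow> (nat \<times> nat \<Rightarrow> real) \<Rightarrow> bool" where
  "typical_design m n \<epsilon> X \<longleftrightarrow>
     real (card {i. i < m \<and> sqrt (2 * ln 2) - \<epsilon>/2 < \<bar>X (i, 0)\<bar>}) < (eta0 + 3/4 * \<epsilon>) * real m \<and>
     0 < (\<Sum>i<m. tail_gain (sqrt (2 * ln 2) - \<epsilon>/2) (X (i, 0))) \<and>
     \<bar>gram m X 0 0 - real m\<bar> < real m / 2 \<and>
     (\<Sum>j\<in>{1..<n}. (gram m X 0 j)\<^sup>2) < (real m)\<^sup>2 / 32"

lemma sample_size_bounds:
  assumes "0 < \<delta>" "0 < \<epsilon>" "\<epsilon> \<le> 1" "1 \<le> n" "128 / \<delta> * real n / \<epsilon>\<^sup>2 \<le> real m"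
  shows "0 < m" "1 / (\<epsilon>\<^sup>2 * real m) \<le> \<delta> / 128" "real n / real m \<le> \<delta> / 128"
    "1 / real m \<le> \<delta> / 128"
proof -
  have m\<epsilon>: "128 * real n / \<delta> \<le> real m * \<epsilon>\<^sup>2"
    using mult_right_mono[OF assms(5), of "\<epsilon>\<^sup>2"] assms(2) by simp
  moreover have "real m * \<epsilon>\<^sup>2 \<le> real m"
    using assms(2,3) by (simp add: power_le_one mult_left_le)
  ultimately have mn: "128 * real n / \<delta> \<le> real m"
    by linarith
  then show m: "0 < m"
    using assms(1,4) by (cases "m = 0") (auto simp: field_simps)
  show "1 / (\<epsilon>\<^sup>2 * real m) \<le> \<delta> / 128"
    using m\<epsilon> m assms(1,2,4) by (simp add: field_simps)
  show n: "real n / real m \<le> \<delta> / 128"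
    using mn m assms(1) by (simp add: field_simps)
  have "1 / real m \<le> real n / real m"
    using assms(4) by (simp add: divide_right_mono)
  then show "1 / real m \<le> \<delta> / 128"
    using n by linarith
qed

lemma prob_typical_design:
  assumes "0 < \<delta>" "0 < \<epsilon>" "\<epsilon> \<le> 1" "1 \<le> n" "128 / \<delta> * real n / \<epsilon>\<^sup>2 \<le> real m"
  defines "A \<equiv> {X \<in> space (gauss_matrix m n). typical_design m n \<epsilon> X}"
  shows "A \<in> sets (gauss_matrix m n)" and "1 - \<delta> \<le> measure (gauss_matrix m n) A"
proof -
  let ?M = "gauss_matrix m n"
  note size = sample_size_bounds[OF assms(1-5)]
  define E1 where "E1 = {X \<in> space ?M. real (card {i. i < m \<and> sqrt (2 * ln 2) - \<epsilon>/2 < \<bar>X (i, 0)\<bar>})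
    < (eta0 + 3/4 * \<epsilon>) * real m}"
  define E2 where "E2 = {X \<in> space ?M. 0 < (\<Sum>i<m. tail_gain (sqrt (2 * ln 2) - \<epsilon>/2) (X (i, 0)))}"
  define E3 where "E3 = {X \<in> space ?M. \<bar>gram m X 0 0 - real m\<bar> < real m / 2}"
  define E4 where "E4 = {X \<in> space ?M. (\<Sum>j\<in>{1..<n}. (gram m X 0 j)\<^sup>2) < (real m)\<^sup>2 / 32}"
  have "E1 \<in> sets ?M"
    unfolding E1_def using assms(2,3,4) size(1) by (intro prob_gauss_tail_count_less(1)) auto
  moreover have "E2 \<in> sets ?M"
    unfolding E2_def using assms(2,3,4) size(1) by (intro prob_gauss_tail_gain_pos(1)) auto
  moreover have "E3 \<in> sets ?M"
    unfolding E3_def using assms(4) size(1) by (intro prob_gauss_gram_diag_close(1)) auto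
  moreover have "E4 \<in> sets ?M"
    unfolding E4_def using size(1) by (intro prob_gauss_gram_cross_small(1)) auto
  ultimately have events: "E1 \<in> sets ?M" "E2 \<in> sets ?M" "E3 \<in> sets ?M" "E4 \<in> sets ?M"
    by blast+
  have "1 - 16 / (\<epsilon>\<^sup>2 * real m) \<le> measure ?M E1"
    unfolding E1_def using assms(2,3,4) size(1) by (intro prob_gauss_tail_count_less(2)) auto
  moreover have "1 - 36 / (\<epsilon>\<^sup>2 * real m) \<le> measure ?M E2"
    unfolding E2_def using assms(2,3,4) size(1) by (intro prob_gauss_tail_gain_pos(2)) auto
  moreover have "1 - 12 / real m \<le> measure ?M E3"
    unfolding E3_def using assms(4) size(1) by (intro prob_gauss_gram_diag_close(2)) auto
  moreover have "1 - 32 * real (n - 1) / real m \<le> measure ?M E4"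
    unfolding E4_def using size(1) by (intro prob_gauss_gram_cross_small(2)) auto
  moreover have "32 * real (n - 1) / real m \<le> 32 * (real n / real m)"
    by (simp add: divide_right_mono)
  moreover have "measure ?M E1 + measure ?M E2 + measure ?M E3 + measure ?M E4 - 3 \<le>
      measure ?M (E1 \<inter> E2 \<inter> E3 \<inter> E4)"
    using gauss_matrix.prob_Int_ge[of E1 m n E2] gauss_matrix.prob_Int_ge[of "E1 \<inter> E2" m n E3]
      gauss_matrix.prob_Int_ge[of "E1 \<inter> E2 \<inter> E3" m n E4] events
    by (simp add: sets.Int)
  moreover have "16 / (\<epsilon>\<^sup>2 * real m) \<le> 16 * (\<delta> / 128)" "36 / (\<epsilon>\<^sup>2 * real m) \<le> 36 * (\<delta> / 128)"
    "12 / real m \<le> 12 * (\<delta> / 128)" "32 * (real n / real m) \<le> 32 * (\<delta> / 128)"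
    using mult_left_mono[OF size(2), of 16] mult_left_mono[OF size(2), of 36]
      mult_left_mono[OF size(4), of 12] mult_left_mono[OF size(3), of 32] by simp_all
  ultimately have "1 - \<delta> \<le> measure ?M (E1 \<inter> E2 \<inter> E3 \<inter> E4)"
    using assms(1) by linarith
  moreover have "A = E1 \<inter> E2 \<inter> E3 \<inter> E4"
    unfolding A_def E1_def E2_def E3_def E4_def typical_design_def by blast
  ultimately show "A \<in> sets ?M" "1 - \<delta> \<le> measure ?M A"
    using events by (simp_all add: sets.Int)
qed

lemma typical_design_not_l1_minimizer:
  assumes "typical_design m n \<epsilon> X" "0 < n" "0 \<le> \<epsilon>" "\<epsilon> \<le> 2" "eta0 + 3/4 * \<epsilon> \<le> \<eta>"
  shows "\<exists>\<zeta>. real (l0norm m \<zeta>) \<le> \<eta> * real m \<and> \<not> is_l1_minimizer m n X (\<lambda>i. matvec n X w i + \<zeta> i) w"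
proof -
  define t where "t = sqrt (2 * ln 2) - \<epsilon>/2"
  define \<zeta> where "\<zeta> = reflect_large t (\<lambda>i. X (i, 0))"
  have col: "matvec n X (\<lambda>j. if j = 0 then 1 else 0) = (\<lambda>i. X (i, 0))"
    using assms(2) by (simp add: matvec_unit fun_eq_iff)
  have "0 \<le> t"
    unfolding t_def using one_le_sqrt_2_ln_2 assms(4) by linarith
  then have "real (l0norm m \<zeta>) < (eta0 + 3/4 * \<epsilon>) * real m"
    using assms(1) by (simp add: \<zeta>_def l0norm_reflect_large typical_design_def t_def)
  also have "\<dots> \<le> \<eta> * real m"
    using assms(5) by (simp add: mult_right_mono)
  finally have "real (l0norm m \<zeta>) \<le> \<eta> * real m"
    by simp
  moreover have "\<not> is_l1_minimizer m n X (\<lambda>i. matvec n X w i + \<zeta> i) w"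
    unfolding \<zeta>_def col[symmetric] using assms(1)
    by (intro reflect_large_not_l1_minimizer) (simp add: col typical_design_def t_def)
  ultimately show ?thesis
    by blast
qed

lemma typical_design_column_noise_far:
  assumes "typical_design m n \<epsilon> X" "0 < n"
  shows "\<exists>d. (\<exists>i<m. d i \<noteq> 0) \<and>
    (\<forall>what. is_l1_minimizer m n X (\<lambda>i. matvec n X w i + d i) what \<longrightarrow>
       1/8 * l1norm m d / real m \<le> l2norm n (\<lambda>j. what j - w j))"
proof (rule exI[of _ "\<lambda>i. X (i, 0)"], intro conjI allI impI)
  have gram: "\<bar>gram m X 0 0 - real m\<bar> < real m / 2"
    and cross: "(\<Sum>j\<in>{1..<n}. (gram m X 0 j)\<^sup>2) < (real m)\<^sup>2 / 32"
    using assms(1) by (simp_all add: typical_design_def)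
  show "\<exists>i<m. X (i, 0) \<noteq> 0"
  proof (rule ccontr)
    assume "\<not> (\<exists>i<m. X (i, 0) \<noteq> 0)"
    then have "gram m X 0 0 = 0"
      by (simp add: gram_def)
    then show False
      using gram by linarith
  qed
  fix what assume "is_l1_minimizer m n X (\<lambda>i. matvec n X w i + X (i, 0)) what"
  then show "1/8 * l1norm m (\<lambda>i. X (i, 0)) / real m \<le> l2norm n (\<lambda>j. what j - w j)"
    using l1_minimizer_far_under_column_noise[OF assms(2) gram cross] by simp
qed

theorem theorem6p1:
  "\<exists>c>0. \<forall>\<delta>>0. \<exists>C>0. \<forall>(n::nat) (m::nat) (\<epsilon>::real) (\<eta>::real) (wstar::nat \<Rightarrow> real).
     0 < \<epsilon> \<longrightarrow> \<epsilon> < 0.2 \<longrightarrow> 1 \<le> n \<longrightarrow> real m \<ge> C * real n / \<epsilon>\<^sup>2 \<longrightarrow>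
     (\<exists>j<n. wstar j \<noteq> 0) \<longrightarrow>
     (\<exists>A \<in> sets (gauss_matrix m n).
        measure (gauss_matrix m n) A \<ge> 1 - \<delta> \<and>
        (\<forall>X\<in>A.
           (\<eta> > eta0 + \<epsilon> \<longrightarrow>
              (\<exists>\<zeta>. real (l0norm m \<zeta>) \<le> \<eta> * real m \<and>
                  \<not> is_l1_minimizer m n X (\<lambda>i. matvec n X wstar i + \<zeta> i) wstar)) \<and>
           (\<exists>d. (\<exists>i<m. d i \<noteq> 0) \<and>
              (\<forall>what. is_l1_minimizer m n X (\<lambda>i. matvec n X wstar i + d i) what \<longrightarrow>
                 l2norm n (\<lambda>j. what j - wstar j) \<ge> c * l1norm m d / real m))))"
  apply (rule exI[of _ "1/8"], intro conjI allI impI, simp)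
  subgoal for \<delta>
    apply (rule exI[of _ "128 / \<delta>"], intro conjI allI impI, simp)
    subgoal premises H for n m \<epsilon> \<eta> wstar
    proof -
      let ?A = "{X \<in> space (gauss_matrix m n). typical_design m n \<epsilon> X}"
      have "?A \<in> sets (gauss_matrix m n)" "1 - \<delta> \<le> measure (gauss_matrix m n) ?A"
        using prob_typical_design[of \<delta> \<epsilon> n m] H by auto
      moreover have "eta0 + 3/4 * \<epsilon> \<le> \<eta>" if "eta0 + \<epsilon> < \<eta>" for \<eta>
        using that H by linarith
      ultimately show ?thesis
        using typical_design_not_l1_minimizer typical_design_column_noise_far H
        by (intro bexI[of _ ?A]) auto
    qed
    done
  done

end
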